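(* Let $(\Omega,\mathcal{F},\mathbb{P},\{\mathcal{F}_t\})$ be a filtered complete probability space satisfying the usual hypotheses, let $U<\infty$, and let $\{X_t\}_{0\le t\le U}$ be a Markov process generating $\{\mathcal{F}_t\}$. Let $\{M_t\}_{0\le t<U}$ be an $\{\mathcal{F}_t\}$-adapted $\mathbb{P}$-martingale that induces a change of measure from $\mathbb{P}$ to an equivalent auxiliary probability measure $\mathbb{M}$ with respect to which the Markov property of $\{X_t\}$ is preserved. Let (i) $f_0(t)$ and $f_1(t)$ be deterministic, positive and non-increasing functions, (ii) $F(t,x)$ be a measurable positive function, and (iii) $w(t,u)$ be a positive measurable function satisfying $w(t,u-s)\le w(t-s,u)$ for $s\le t\wedge u$. Define, for $0\le t\le T<U$, \[ Y^{\mathbb{M}}_{tT}=\int_{T-t}^{U-t}\mathbb{E}^{\mathbb{M}}\left[F(t+u,X_{t+u})\,\vert\,X_t\right]\,w(T,u-T+t)\,\mathrm{d}u, \] where $F$ and $w$ are such that $Y^{\mathbb{M}}_{tT}<\infty$ for all $t$. Set $\pi_0=1+f_1(0)Y^{\mathbb{M}}_{00}$, \[ P_{0t}=\frac{f_0(t)+f_1(t)Y^{\mathbb{M}}_{0t}}{1+f_1(0)Y^{\mathbb{M}}_{00}},\qquad y^{\mathbb{M}}(t)=\frac{f_1(t)}{1+f_1(0)Y^{\mathbb{M}}_{00}}. \] Then the process \[ \pi_t=\frac{\pi_0}{M_0}\left[P_{0t}+y^{\mathbb{M}}(t)\left(Y^{\mathbb{M}}_{tt}-Y^{\mathbb{M}}_{0t}\right)\right]M_t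 \] is a positive $(\{\mathcal{F}_t\},\mathbb{P})$-supermartingale. Moreover, taking this $\{\pi_t\}$ as the pricing kernel, the discount bond price process $P_{tT}=\pi_t^{-1}\mathbb{E}^{\mathbb{P}}[\pi_T\,\vert\,\mathcal{F}_t]$ is given, for $0\le t\le T<U$, by \[ P_{tT}=\frac{P_{0T}+y^{\mathbb{M}}(T)\left(Y^{\mathbb{M}}_{tT}-Y^{\mathbb{M}}_{0T}\right)}{P_{0t}+y^{\mathbb{M}}(t)\left(Y^{\mathbb{M}}_{tt}-Y^{\mathbb{M}}_{0t}\right)}. \]
   Context: The market filtration $\{\mathcal{F}_t\}$ is the natural filtration of $\{X_t\}$, and $\{X_t\}$ is Markov with respect to it. For a pricing kernel $\{\pi_t\}$, the price at time $t$ of a discount bond with maturity $T$ is $P_{tT}=\frac{1}{\pi_t}\mathbb{E}^{\mathbb{P}}[\pi_T\mid\mathcal{F}_t]$. *)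

theory Defs
  imports "HOL-Probability.Probability"
begin

definition aug_nat_filtration ::
  "'a measure \<Rightarrow> 'b measure \<Rightarrow> (real \<Rightarrow> 'a \<Rightarrow> 'b) \<Rightarrow> real \<Rightarrow> 'a measure" where
  "aug_nat_filtration P S X t =
     sigma (space P) ({X s -` B \<inter> space P | s B. 0 \<le> s \<and> s \<le> t \<and> B \<in> sets S} \<union> null_sets P)"

definition sigma_of :: "'a measure \<Rightarrow> 'b measure \<Rightarrow> ('a \<Rightarrow> 'b) \<Rightarrow> 'a measure" where
  "sigma_of P S Y = vimage_algebra (space P) Y S"

definition markov_on ::
  "'a measure \<Rightarrow> 'b measure \<Rightarrow> (real \<Rightarrow> 'a measure) \<Rightarrow> (real \<Rightarrow> 'a \<Rightarrow> 'b) \<Rightarrow> real \<Rightarrow> bool" where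
  "markov_on Q S Fs X U \<longleftrightarrow>
     (\<forall>s t. 0 \<le> s \<longrightarrow> s \<le> t \<longrightarrow> t \<le> U \<longrightarrow>
        (\<forall>g \<in> borel_measurable S.
           AE \<omega> in Q. nn_cond_exp Q (Fs s) (\<lambda>\<omega>. g (X t \<omega>)) \<omega>
                    = nn_cond_exp Q (sigma_of Q S (X s)) (\<lambda>\<omega>. g (X t \<omega>)) \<omega>))"

definition martingale_on ::
  "'a measure \<Rightarrow> (real \<Rightarrow> 'a measure) \<Rightarrow> real set \<Rightarrow> (real \<Rightarrow> 'a \<Rightarrow> real) \<Rightarrow> bool" where
  "martingale_on P Fs I Z \<longleftrightarrow>
     (\<forall>t\<in>I. integrable P (Z t) \<and> Z t \<in> borel_measurable (Fs t)) \<and>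
     (\<forall>s\<in>I. \<forall>t\<in>I. s \<le> t \<longrightarrow> (AE \<omega> in P. real_cond_exp P (Fs s) (Z t) \<omega> = Z s \<omega>))"

definition supermartingale_on ::
  "'a measure \<Rightarrow> (real \<Rightarrow> 'a measure) \<Rightarrow> real set \<Rightarrow> (real \<Rightarrow> 'a \<Rightarrow> real) \<Rightarrow> bool" where
  "supermartingale_on P Fs I Z \<longleftrightarrow>
     (\<forall>t\<in>I. integrable P (Z t) \<and> Z t \<in> borel_measurable (Fs t)) \<and>
     (\<forall>s\<in>I. \<forall>t\<in>I. s \<le> t \<longrightarrow> (AE \<omega> in P. real_cond_exp P (Fs s) (Z t) \<omega> \<le> Z s \<omega>))"

text \<open>The quantity Y^M_{tT}(omega), where C t u is a (jointly measurable) version of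
  E^M[F(t+u, X_{t+u}) | X_t].\<close>
definition Yenn :: "(real \<Rightarrow> real \<Rightarrow> 'a \<Rightarrow> ennreal) \<Rightarrow> (real \<Rightarrow> real \<Rightarrow> real) \<Rightarrow> real
                      \<Rightarrow> real \<Rightarrow> real \<Rightarrow> 'a \<Rightarrow> ennreal" where
  "Yenn C w U t T \<omega> = (\<integral>\<^sup>+ u \<in> {T - t..U - t}. C t u \<omega> * ennreal (w T (u - T + t)) \<partial>lborel)"

definition Yr :: "(real \<Rightarrow> real \<Rightarrow> 'a \<Rightarrow> ennreal) \<Rightarrow> (real \<Rightarrow> real \<Rightarrow> real) \<Rightarrow> real
                      \<Rightarrow> real \<Rightarrow> real \<Rightarrow> 'a \<Rightarrow> real" where
  "Yr C w U t T \<omega> = enn2real (Yenn C w U t T \<omega>)"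

end

theory Submission
  imports Defs
begin

text \<open>The normalising factor pi_0 cancels, so pi_t = (f_0(t) + f_1(t) Y_tt) M_t / M_0.
  The key fact is that t \<mapsto> Y_tT is an M-martingale on [0, T]: by the Markov property under M,
  E^M[Y_TT | F_t] is the integral of w(T, u) E^M[F(T + u, X_(T+u)) | X_t] over u \<ge> 0, which after
  the shift u \<mapsto> u + T - t is Y_tT. Bayes' formula with the density M_t / M_0 turns this into
  E^P[pi_T | F_t] = (f_0(T) + f_1(T) Y_tT) M_t / M_0, which is the bond-price formula.
  The supermartingale property follows because f_0 and f_1 are non-increasing and the condition
  on w gives Y_tT \<le> Y_tt; integrability holds because X_0 is deterministic, so that
  E^M[Y_tT] = Y_0T is a finite constant.\<close>

lemma ae_filter_eq_if_null_sets_eq: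
  assumes "space M = space N" "null_sets M = null_sets N"
  shows "ae_filter M = ae_filter N"
  unfolding ae_filter_def assms ..

lemma measurable_AE_eq_in_subalgebra:
  assumes sub: "subalgebra M G" and null: "null_sets M \<subseteq> sets G"
    and f: "f \<in> measurable M N" and g: "g \<in> measurable G N"
    and ae: "AE x in M. f x = g x"
  shows "f \<in> measurable G N"
proof -
  obtain Z where Z: "Z \<in> null_sets M" "{x\<in>space M. f x \<noteq> g x} \<subseteq> Z"
    using ae unfolding eventually_ae_filter by blast
  show ?thesis
  proof (rule measurableI)
    show "x \<in> space G \<Longrightarrow> f x \<in> space N" for x
      using f sub by (auto simp: subalgebra_def measurable_def)
  next
    fix B assume B: "B \<in> sets N"
    have "f -` B \<inter> space G = (g -` B \<inter> space G - Z) \<union> (f -` B \<inter> space M \<inter> Z)"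
      using sub Z(2) unfolding subalgebra_def by auto
    moreover have "f -` B \<inter> space M \<inter> Z \<in> null_sets M"
      using Z(1) measurable_sets[OF f B] by (blast intro: null_sets_subset)
    ultimately show "f -` B \<inter> space G \<in> sets G"
      using measurable_sets[OF g B] Z(1) null by (metis sets.Diff sets.Un subsetD)
  qed
qed

lemma measurable_vimage_algebra_factor:
  fixes f :: "'a \<Rightarrow> 'c::t1_space"
  assumes f: "f \<in> borel_measurable (vimage_algebra \<Omega> X S)" and X: "X \<in> \<Omega> \<rightarrow> space S"
    and x: "x \<in> \<Omega>" and y: "y \<in> \<Omega>" and eq: "X x = X y"
  shows "f x = f y"
proof -
  have "f -` {f x} \<inter> \<Omega> \<in> sets (vimage_algebra \<Omega> X S)"
    using measurable_sets[OF f] by simp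
  then obtain B where B: "f -` {f x} \<inter> \<Omega> = X -` B \<inter> \<Omega>"
    using X by (auto simp: sets_vimage_algebra2)
  have "x \<in> X -` B \<inter> \<Omega>"
    using x by (simp flip: B)
  then have "y \<in> f -` {f x} \<inter> \<Omega>"
    unfolding B using y eq by simp
  then show ?thesis by simp
qed

lemma nn_integral_density_on_subalgebra:
  assumes subM: "subalgebra M G" and subN: "subalgebra N G"
    and \<rho>: "\<rho> \<in> borel_measurable G"
    and density: "\<And>A. A \<in> sets G \<Longrightarrow> emeasure N A = (\<integral>\<^sup>+x\<in>A. \<rho> x \<partial>M)"
    and h: "h \<in> borel_measurable G"
  shows "(\<integral>\<^sup>+x. \<rho> x * h x \<partial>M) = (\<integral>\<^sup>+x. h x \<partial>N)"
proof -
  have \<rho>r: "\<rho> \<in> borel_measurable (restr_to_subalg M G)"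
    using measurable_in_subalg[OF subM \<rho>] .
  have restr_N: "restr_to_subalg N G = density (restr_to_subalg M G) \<rho>"
  proof (rule measure_eqI)
    show "sets (restr_to_subalg N G) = sets (density (restr_to_subalg M G) \<rho>)"
      by (simp add: sets_restr_to_subalg subM subN)
  next
    fix A assume "A \<in> sets (restr_to_subalg N G)"
    then have A[measurable]: "A \<in> sets G" by (simp add: sets_restr_to_subalg subN)
    have "emeasure (restr_to_subalg N G) A = (\<integral>\<^sup>+x. \<rho> x * indicator A x \<partial>M)"
      by (simp add: emeasure_restr_to_subalg[OF subN A] density[OF A])
    also have "\<dots> = (\<integral>\<^sup>+x. \<rho> x * indicator A x \<partial>restr_to_subalg M G)"
      by (rule nn_integral_subalgebra2[symmetric, OF subM]) (use \<rho> in measurable)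
    also have "\<dots> = emeasure (density (restr_to_subalg M G) \<rho>) A"
      by (rule emeasure_density[symmetric, OF \<rho>r]) (simp add: sets_restr_to_subalg subM)
    finally show "emeasure (restr_to_subalg N G) A = emeasure (density (restr_to_subalg M G) \<rho>) A" .
  qed
  have "(\<integral>\<^sup>+x. h x \<partial>N) = (\<integral>\<^sup>+x. h x \<partial>density (restr_to_subalg M G) \<rho>)"
    by (simp add: nn_integral_subalgebra2[symmetric, OF subN h] restr_N)
  also have "\<dots> = (\<integral>\<^sup>+x. \<rho> x * h x \<partial>restr_to_subalg M G)"
    by (rule nn_integral_density[OF \<rho>r measurable_in_subalg[OF subM h]])
  also have "\<dots> = (\<integral>\<^sup>+x. \<rho> x * h x \<partial>M)"
    by (rule nn_integral_subalgebra2[OF subM]) (use \<rho> h in measurable)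
  finally show ?thesis ..
qed

text \<open>Joint measurability holds only with respect to M, so the G-measurability of the
  integral is obtained only up to a null set, via the conditional expectation.\<close>

lemma (in prob_space) AE_nn_integral_lborel_eq_nn_cond_exp:
  fixes c :: "real \<Rightarrow> 'a \<Rightarrow> ennreal"
  assumes sub: "subalgebra M G"
    and c: "(\<lambda>(u, x). c u x) \<in> borel_measurable (lborel \<Otimes>\<^sub>M M)"
    and cG: "\<And>u. c u \<in> borel_measurable G"
  shows "AE x in M. (\<integral>\<^sup>+u. c u x \<partial>lborel) = nn_cond_exp M G (\<lambda>x. \<integral>\<^sup>+u. c u x \<partial>lborel) x"
proof -
  interpret G: finite_measure_subalgebra M G
    by unfold_locales (rule sub)
  interpret pair_sigma_finite lborel M ..
  define Y where "Y = (\<lambda>x. \<integral>\<^sup>+u. c u x \<partial>lborel)"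
  define N where "N = nn_cond_exp M G Y"
  have Y[measurable]: "Y \<in> borel_measurable M"
    unfolding Y_def using lborel.borel_measurable_nn_integral[OF measurable_pair_swap[OF c]]
    by simp
  have cu: "(\<lambda>u. c u x) \<in> borel_measurable lborel" if "x \<in> space M" for x
    using measurable_comp[OF measurable_Pair2'[OF that] c] by (simp add: comp_def)
  have [measurable]: "c u \<in> borel_measurable M" for u
    using measurable_from_subalg[OF sub cG] .
  have N[measurable]: "N \<in> borel_measurable M" "N \<in> borel_measurable G"
    unfolding N_def by simp_all
  have "(\<integral>\<^sup>+x. Y x * indicator A x \<partial>M) = (\<integral>\<^sup>+x. N x * indicator A x \<partial>M)"
    if A[measurable]: "A \<in> sets M" for A
  proof -
    define NA where "NA = nn_cond_exp M G (indicator A)"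
    have [measurable]: "NA \<in> borel_measurable M" "NA \<in> borel_measurable G"
      unfolding NA_def by simp_all
    have "(\<integral>\<^sup>+x. Y x * indicator A x \<partial>M) = (\<integral>\<^sup>+x. \<integral>\<^sup>+u. c u x * indicator A x \<partial>lborel \<partial>M)"
      unfolding Y_def by (intro nn_integral_cong) (simp add: nn_integral_multc[OF cu])
    also have "\<dots> = (\<integral>\<^sup>+u. \<integral>\<^sup>+x. c u x * indicator A x \<partial>M \<partial>lborel)"
      using Fubini'[of "\<lambda>u x. c u x * indicator A x"] c by simp
    also have "\<dots> = (\<integral>\<^sup>+u. \<integral>\<^sup>+x. c u x * NA x \<partial>M \<partial>lborel)"
      unfolding NA_def by (simp add: G.nn_cond_exp_intg[OF cG])
    also have "\<dots> = (\<integral>\<^sup>+x. \<integral>\<^sup>+u. c u x * NA x \<partial>lborel \<partial>M)"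
      using Fubini'[of "\<lambda>u x. c u x * NA x"] c by simp
    also have "\<dots> = (\<integral>\<^sup>+x. NA x * Y x \<partial>M)"
      unfolding Y_def by (intro nn_integral_cong) (simp add: nn_integral_cmult[OF cu] mult.commute)
    also have "\<dots> = (\<integral>\<^sup>+x. NA x * N x \<partial>M)"
      unfolding N_def by (simp add: G.nn_cond_exp_intg)
    also have "\<dots> = (\<integral>\<^sup>+x. N x * indicator A x \<partial>M)"
      unfolding NA_def by (simp add: G.nn_cond_exp_intg mult.commute)
    finally show ?thesis .
  qed
  then have "density M Y = density M N"
    by (intro measure_eqI) (auto simp: emeasure_density)
  then have "AE x in M. Y x = N x"
    by (rule sigma_finite_measure.density_unique[OF prob_space_imp_sigma_finite[OF prob_space_axioms] Y N(1)])
  then show ?thesis unfolding Y_def N_def .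
qed

locale augmented_filtration = prob_space P for P :: "'a measure" +
  fixes S :: "'b measure" and X :: "real \<Rightarrow> 'a \<Rightarrow> 'b" and U :: real
    and Fs :: "real \<Rightarrow> 'a measure"
  assumes X_measurable: "\<forall>t\<in>{0..U}. X t \<in> measurable P S"
    and Fs_def: "\<forall>t. Fs t = aug_nat_filtration P S X t"
begin

abbreviation generators :: "real \<Rightarrow> 'a set set" where
  "generators t \<equiv> {X s -` B \<inter> space P | s B. 0 \<le> s \<and> s \<le> t \<and> B \<in> sets S} \<union> null_sets P"

lemma generators_subset: "t \<le> U \<Longrightarrow> generators t \<subseteq> sets P"
  using X_measurable by (auto intro: measurable_sets)

lemma space_Fs [simp]: "space (Fs t) = space P"
  by (simp add: Fs_def aug_nat_filtration_def space_measure_of_conv)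

lemma sets_Fs: "t \<le> U \<Longrightarrow> sets (Fs t) = sigma_sets (space P) (generators t)"
  unfolding Fs_def[rule_format] aug_nat_filtration_def
  by (rule sets_measure_of) (use generators_subset sets.sets_into_space in blast)

lemma sets_Fs_subset: "t \<le> U \<Longrightarrow> sets (Fs t) \<subseteq> sets P"
  by (simp add: sets_Fs sets.sigma_sets_subset[OF generators_subset])

lemma subalgebra_Fs: "t \<le> U \<Longrightarrow> subalgebra P (Fs t)"
  by (simp add: subalgebra_def sets_Fs_subset)

lemma Fs_mono: "s \<le> t \<Longrightarrow> t \<le> U \<Longrightarrow> sets (Fs s) \<subseteq> sets (Fs t)"
  by (simp add: sets_Fs) (rule sigma_sets_mono'; blast intro: order_trans)

lemma null_sets_subset_Fs: "t \<le> U \<Longrightarrow> null_sets P \<subseteq> sets (Fs t)"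
  by (auto simp: sets_Fs)

lemma subalgebra_Fs_sigma_of:
  assumes "0 \<le> t" "t \<le> U"
  shows "subalgebra (Fs t) (sigma_of P S (X t))"
proof -
  have "X t \<in> space P \<rightarrow> space S"
    using X_measurable assms by (auto simp: measurable_def)
  then have "sets (sigma_of P S (X t)) \<subseteq> generators t"
    using assms by (auto simp: sigma_of_def sets_vimage_algebra2)
  then show ?thesis
    using assms by (auto simp: subalgebra_def sigma_of_def sets_Fs)
qed

end

locale weighted_heat_kernel = augmented_filtration P S X U Fs + Q: prob_space Q
  for P :: "'a measure" and S :: "'b measure" and X U Fs and Q :: "'a measure" +
  fixes Mg :: "real \<Rightarrow> 'a \<Rightarrow> real" and F :: "real \<Rightarrow> 'b \<Rightarrow> real"
    and w :: "real \<Rightarrow> real \<Rightarrow> real" and C :: "real \<Rightarrow> real \<Rightarrow> 'a \<Rightarrow> ennreal"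
  assumes U_pos: "0 < U"
    and X0_deterministic: "\<exists>x0\<in>space S. AE \<omega> in P. X 0 \<omega> = x0"
    and Mg_adapted: "\<forall>t\<in>{0..<U}. Mg t \<in> borel_measurable (Fs t)"
    and Mg_pos: "\<forall>t\<in>{0..<U}. AE \<omega> in P. 0 < Mg t \<omega>"
    and Q_space: "space Q = space P"
    and Q_sets: "sets Q = sets P"
    and Q_equiv: "\<forall>A\<in>sets P. emeasure P A = 0 \<longleftrightarrow> emeasure Q A = 0"
    and Q_density: "\<forall>t\<in>{0..<U}. \<forall>A\<in>sets (Fs t).
                      emeasure Q A = (\<integral>\<^sup>+ \<omega> \<in> A. ennreal (Mg t \<omega> / Mg 0 \<omega>) \<partial>P)"
    and X_markov_Q: "markov_on Q S Fs X U"
    and F_measurable: "(\<lambda>(t, x). F t x) \<in> borel_measurable (borel \<Otimes>\<^sub>M S)"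
    and w_measurable: "(\<lambda>(t, u). w t u) \<in> borel_measurable (borel \<Otimes>\<^sub>M borel)"
    and w_shift: "\<forall>t u s. 0 \<le> s \<longrightarrow> s \<le> t \<longrightarrow> s \<le> u \<longrightarrow> w t (u - s) \<le> w (t - s) u"
    and C_measurable: "\<forall>t\<in>{0..U}. (\<lambda>(u, \<omega>). C t u \<omega>) \<in> borel_measurable (lborel \<Otimes>\<^sub>M P)"
    and C_version: "\<forall>t u. 0 \<le> t \<longrightarrow> 0 \<le> u \<longrightarrow> t + u \<le> U \<longrightarrow>
           C t u \<in> borel_measurable (sigma_of Q S (X t)) \<and>
           (AE \<omega> in Q. C t u \<omega> =
              nn_cond_exp Q (sigma_of Q S (X t)) (\<lambda>\<omega>. ennreal (F (t + u) (X (t + u) \<omega>))) \<omega>)"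
    and Yenn_finite: "\<forall>t T. 0 \<le> t \<longrightarrow> t \<le> T \<longrightarrow> T < U \<longrightarrow> (AE \<omega> in P. Yenn C w U t T \<omega> < \<infinity>)"
begin

lemma AE_Q_iff_AE_P: "(AE \<omega> in Q. R \<omega>) \<longleftrightarrow> (AE \<omega> in P. R \<omega>)"
proof -
  have ae_filter_eq: "ae_filter Q = ae_filter P"
    using Q_equiv Q_sets by (intro ae_filter_eq_if_null_sets_eq Q_space) (auto simp: null_sets_def)
  show ?thesis
    unfolding ae_filter_eq ..
qed

lemma measurable_Q_iff_P [simp]: "f \<in> measurable Q N \<longleftrightarrow> f \<in> measurable P N"
  by (simp add: measurable_cong_sets[OF Q_sets refl])

lemma sigma_of_Q: "sigma_of Q S = sigma_of P S"
  unfolding sigma_of_def Q_space ..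

lemma subalgebra_Q_Fs: "t \<le> U \<Longrightarrow> subalgebra Q (Fs t)"
  using subalgebra_Fs by (simp add: subalgebra_def Q_sets Q_space)

lemma C_measurable_sigma_of:
  "0 \<le> t \<Longrightarrow> 0 \<le> u \<Longrightarrow> t + u \<le> U \<Longrightarrow> C t u \<in> borel_measurable (sigma_of P S (X t))"
  using C_version sigma_of_Q by auto

lemma C_measurable_Fs:
  assumes "0 \<le> t" "0 \<le> u" "t + u \<le> U"
  shows "C t u \<in> borel_measurable (Fs t)"
  using measurable_from_subalg[OF subalgebra_Fs_sigma_of C_measurable_sigma_of] assms by auto

lemma nn_integral_change_measure:
  assumes r: "r \<in> {0..<U}" and h: "h \<in> borel_measurable (Fs r)"
  shows "(\<integral>\<^sup>+\<omega>. ennreal (Mg r \<omega> / Mg 0 \<omega>) * h \<omega> \<partial>P) = (\<integral>\<^sup>+\<omega>. h \<omega> \<partial>Q)"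
proof (rule nn_integral_density_on_subalgebra[OF subalgebra_Fs subalgebra_Q_Fs _ _ h])
  show "r \<le> U" using r by simp
next
  have "subalgebra (Fs r) (Fs 0)"
    using Fs_mono[of 0 r] r by (auto simp: subalgebra_def)
  then have [measurable]: "Mg 0 \<in> borel_measurable (Fs r)"
    by (rule measurable_from_subalg) (use Mg_adapted U_pos in auto)
  have [measurable]: "Mg r \<in> borel_measurable (Fs r)"
    using Mg_adapted r by auto
  show "(\<lambda>\<omega>. ennreal (Mg r \<omega> / Mg 0 \<omega>)) \<in> borel_measurable (Fs r)"
    by measurable
qed (use Q_density r in auto)

definition Y_integrand :: "real \<Rightarrow> real \<Rightarrow> real \<Rightarrow> 'a \<Rightarrow> ennreal" where
  "Y_integrand s T u \<omega> = C s u \<omega> * ennreal (w T (u - T + s)) * indicator {T - s..U - s} u"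

lemma Yenn_eq_nn_integral_Y_integrand:
  "Yenn C w U s T \<omega> = (\<integral>\<^sup>+u. Y_integrand s T u \<omega> \<partial>lborel)"
  unfolding Yenn_def Y_integrand_def ..

lemma Y_integrand_measurable:
  assumes "0 \<le> s" "s \<le> U"
  shows "(\<lambda>(u, \<omega>). Y_integrand s T u \<omega>) \<in> borel_measurable (lborel \<Otimes>\<^sub>M P)"
proof -
  have [measurable]: "(\<lambda>(u, \<omega>). C s u \<omega>) \<in> borel_measurable (lborel \<Otimes>\<^sub>M P)"
    using C_measurable assms by auto
  have "(\<lambda>u. w T (u - T + s)) = (\<lambda>(t, u). w t u) \<circ> (\<lambda>u. (T, u - T + s))"
    by auto
  also have "\<dots> \<in> borel_measurable borel"
    by (rule measurable_comp[OF _ w_measurable]) measurable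
  finally have [measurable]: "(\<lambda>u. w T (u - T + s)) \<in> borel_measurable borel" .
  show ?thesis
    unfolding Y_integrand_def by measurable
qed

lemma Y_integrand_measurable_sigma_of:
  assumes "0 \<le> s" "s \<le> T" "T \<le> U"
  shows "Y_integrand s T u \<in> borel_measurable (sigma_of P S (X s))"
proof (cases "u \<in> {T - s..U - s}")
  case True
  then have [measurable]: "C s u \<in> borel_measurable (sigma_of P S (X s))"
    using C_measurable_sigma_of assms by auto
  show ?thesis
    unfolding Y_integrand_def by measurable
next
  case False
  then have "Y_integrand s T u = (\<lambda>_. 0)"
    by (auto simp: Y_integrand_def fun_eq_iff)
  then show ?thesis by simp
qed

lemma Yenn_measurable:
  assumes "0 \<le> s" "s \<le> U"
  shows "Yenn C w U s T \<in> borel_measurable P"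
  unfolding Yenn_eq_nn_integral_Y_integrand
  using lborel.borel_measurable_nn_integral[OF measurable_pair_swap[OF Y_integrand_measurable[OF assms]]]
  by simp

lemma Yenn_measurable_Fs:
  assumes "0 \<le> s" "s \<le> T" "T \<le> U"
  shows "Yenn C w U s T \<in> borel_measurable (Fs s)"
proof -
  let ?G = "sigma_of P S (X s)"
  have sU: "s \<le> U" using assms by simp
  have "subalgebra P ?G"
    using subalgebra_Fs_sigma_of[OF assms(1) sU] subalgebra_Fs[OF sU]
    by (auto simp: subalgebra_def)
  then have "AE \<omega> in P. Yenn C w U s T \<omega> = nn_cond_exp P ?G (Yenn C w U s T) \<omega>"
    using AE_nn_integral_lborel_eq_nn_cond_exp[OF _ Y_integrand_measurable[OF assms(1) sU]
        Y_integrand_measurable_sigma_of[OF assms]]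
    by (simp add: Yenn_eq_nn_integral_Y_integrand[abs_def])
  moreover have "nn_cond_exp P ?G (Yenn C w U s T) \<in> borel_measurable (Fs s)"
    by (rule measurable_from_subalg[OF subalgebra_Fs_sigma_of[OF assms(1) sU]]) simp
  ultimately show ?thesis
    using measurable_AE_eq_in_subalgebra[OF subalgebra_Fs[OF sU] null_sets_subset_Fs[OF sU]
        Yenn_measurable[OF assms(1) sU]] by blast
qed

lemma Yr_measurable_Fs:
  "0 \<le> s \<Longrightarrow> s \<le> T \<Longrightarrow> T \<le> U \<Longrightarrow> Yr C w U s T \<in> borel_measurable (Fs s)"
  unfolding Yr_def[abs_def] using Yenn_measurable_Fs by measurable

lemma Yenn_antimono:
  assumes "0 \<le> s" "s \<le> t"
  shows "Yenn C w U s t \<omega> \<le> Yenn C w U s s \<omega>"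
  unfolding Yenn_eq_nn_integral_Y_integrand
proof (rule nn_integral_mono)
  fix u
  show "Y_integrand s t u \<omega> \<le> Y_integrand s s u \<omega>"
  proof (cases "u \<in> {t - s..U - s}")
    case True
    have "w t (u - (t - s)) \<le> w (t - (t - s)) u"
      using w_shift[rule_format, of "t - s" t u] True assms by auto
    then have "w t (u - t + s) \<le> w s (u - s + s)"
      by (simp add: algebra_simps)
    then show ?thesis
      using True assms by (auto simp: Y_integrand_def intro!: mult_left_mono ennreal_leI)
  qed (simp add: Y_integrand_def)
qed

lemma Yenn_0_AE_constant:
  assumes "0 \<le> T" "T < U"
  obtains c where "c < \<infinity>" "AE \<omega> in P. Yenn C w U 0 T \<omega> = c"
proof -
  obtain x0 where x0: "AE \<omega> in P. X 0 \<omega> = x0"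
    using X0_deterministic by auto
  have "AE \<omega> in P. \<omega> \<in> space P \<and> X 0 \<omega> = x0 \<and> Yenn C w U 0 T \<omega> < \<infinity>"
    using x0 Yenn_finite assms by auto
  then obtain \<omega>0 where \<omega>0: "\<omega>0 \<in> space P" "X 0 \<omega>0 = x0" "Yenn C w U 0 T \<omega>0 < \<infinity>"
    using eventually_happens'[OF ae_filter_bot] by blast
  have X0: "X 0 \<in> space P \<rightarrow> space S"
    using X_measurable U_pos by (auto simp: measurable_def)
  have "Y_integrand 0 T u \<omega> = Y_integrand 0 T u \<omega>0"
    if "\<omega> \<in> space P" "X 0 \<omega> = x0" for u \<omega>
    using Y_integrand_measurable_sigma_of[of 0 T u] assms \<omega>0 that
    by (intro measurable_vimage_algebra_factor[OF _ X0]) (auto simp: sigma_of_def)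
  then have "Yenn C w U 0 T \<omega> = Yenn C w U 0 T \<omega>0"
    if "\<omega> \<in> space P" "X 0 \<omega> = x0" for \<omega>
    unfolding Yenn_eq_nn_integral_Y_integrand using that by (intro nn_integral_cong) blast
  then have "AE \<omega> in P. Yenn C w U 0 T \<omega> = Yenn C w U 0 T \<omega>0"
    using x0 by auto
  with \<omega>0 that show ?thesis by blast
qed

lemma nn_integral_C_indicator:
  assumes "0 \<le> t" "0 \<le> u" "t + u \<le> U" and A: "A \<in> sets (Fs t)"
  shows "(\<integral>\<^sup>+\<omega>. C t u \<omega> * indicator A \<omega> \<partial>Q)
       = (\<integral>\<^sup>+\<omega>. ennreal (F (t + u) (X (t + u) \<omega>)) * indicator A \<omega> \<partial>Q)"
proof -
  have tU: "t \<le> U" using assms by simp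
  interpret Fs_t: finite_measure_subalgebra Q "Fs t"
    by unfold_locales (rule subalgebra_Q_Fs[OF tU])
  define h where "h \<omega> = ennreal (F (t + u) (X (t + u) \<omega>))" for \<omega>
  have "(\<lambda>x. F (t + u) x) = (\<lambda>(t, x). F t x) \<circ> Pair (t + u)"
    by auto
  also have "\<dots> \<in> borel_measurable S"
    by (rule measurable_comp[OF _ F_measurable]) simp
  finally have F_t: "(\<lambda>x. ennreal (F (t + u) x)) \<in> borel_measurable S"
    by measurable
  moreover have "X (t + u) \<in> measurable P S"
    using X_measurable assms by simp
  ultimately have h: "h \<in> borel_measurable Q"
    unfolding h_def by (simp add: measurable_compose)
  have "AE \<omega> in Q. C t u \<omega> = nn_cond_exp Q (sigma_of Q S (X t)) h \<omega>"
    using C_version assms unfolding h_def by auto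
  moreover have "AE \<omega> in Q. nn_cond_exp Q (Fs t) h \<omega> = nn_cond_exp Q (sigma_of Q S (X t)) h \<omega>"
    using X_markov_Q[unfolded markov_on_def, rule_format, of t "t + u" "\<lambda>x. ennreal (F (t + u) x)"]
      F_t assms unfolding h_def by auto
  ultimately have "(\<integral>\<^sup>+\<omega>. C t u \<omega> * indicator A \<omega> \<partial>Q)
      = (\<integral>\<^sup>+\<omega>. indicator A \<omega> * nn_cond_exp Q (Fs t) h \<omega> \<partial>Q)"
    by (intro nn_integral_cong_AE) (auto simp: mult.commute)
  also have "\<dots> = (\<integral>\<^sup>+\<omega>. indicator A \<omega> * h \<omega> \<partial>Q)"
    by (rule Fs_t.nn_cond_exp_intg[OF _ h]) (use A in measurable)
  finally show ?thesis
    unfolding h_def by (simp add: mult.commute)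
qed

lemma nn_integral_Yenn_indicator_Fubini:
  assumes "0 \<le> s" "s \<le> U" and A: "A \<in> sets P"
  shows "(\<integral>\<^sup>+\<omega>. Yenn C w U s T \<omega> * indicator A \<omega> \<partial>Q)
           = (\<integral>\<^sup>+u. \<integral>\<^sup>+\<omega>. Y_integrand s T u \<omega> * indicator A \<omega> \<partial>Q \<partial>lborel)"
    and "(\<lambda>u. \<integral>\<^sup>+\<omega>. Y_integrand s T u \<omega> * indicator A \<omega> \<partial>Q) \<in> borel_measurable borel"
proof -
  interpret pair_sigma_finite lborel Q ..
  have c: "(\<lambda>(u, \<omega>). Y_integrand s T u \<omega>) \<in> borel_measurable (lborel \<Otimes>\<^sub>M Q)"
    by (subst measurable_cong_sets[OF sets_pair_measure_cong[OF refl Q_sets] refl])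
      (rule Y_integrand_measurable[OF assms(1,2)])
  then have cA: "(\<lambda>(u, \<omega>). Y_integrand s T u \<omega> * indicator A \<omega>) \<in> borel_measurable (lborel \<Otimes>\<^sub>M Q)"
    using A Q_sets by measurable
  have "(\<lambda>u. Y_integrand s T u \<omega>) \<in> borel_measurable lborel" if "\<omega> \<in> space Q" for \<omega>
    using measurable_comp[OF measurable_Pair2'[OF that] c] by (simp add: comp_def)
  then have "(\<integral>\<^sup>+\<omega>. Yenn C w U s T \<omega> * indicator A \<omega> \<partial>Q)
      = (\<integral>\<^sup>+\<omega>. \<integral>\<^sup>+u. Y_integrand s T u \<omega> * indicator A \<omega> \<partial>lborel \<partial>Q)"
    by (intro nn_integral_cong) (simp add: Yenn_eq_nn_integral_Y_integrand nn_integral_multc)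
  also have "\<dots> = (\<integral>\<^sup>+u. \<integral>\<^sup>+\<omega>. Y_integrand s T u \<omega> * indicator A \<omega> \<partial>Q \<partial>lborel)"
    using Fubini'[of "\<lambda>u \<omega>. Y_integrand s T u \<omega> * indicator A \<omega>"] cA by simp
  finally show "(\<integral>\<^sup>+\<omega>. Yenn C w U s T \<omega> * indicator A \<omega> \<partial>Q)
           = (\<integral>\<^sup>+u. \<integral>\<^sup>+\<omega>. Y_integrand s T u \<omega> * indicator A \<omega> \<partial>Q \<partial>lborel)" .
  show "(\<lambda>u. \<integral>\<^sup>+\<omega>. Y_integrand s T u \<omega> * indicator A \<omega> \<partial>Q) \<in> borel_measurable borel"
    using Q.borel_measurable_nn_integral[OF cA] by simp
qed

lemma nn_integral_Y_integrand_indicator: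
  assumes "0 \<le> t" "t \<le> s" "s \<le> T" "T < U" and A: "A \<in> sets (Fs t)"
  shows "(\<integral>\<^sup>+\<omega>. Y_integrand s T u \<omega> * indicator A \<omega> \<partial>Q)
       = indicator {T - s..U - s} u * ennreal (w T (u - T + s)) *
         (\<integral>\<^sup>+\<omega>. ennreal (F (s + u) (X (s + u) \<omega>)) * indicator A \<omega> \<partial>Q)"
proof (cases "u \<in> {T - s..U - s}")
  case True
  have As: "A \<in> sets (Fs s)"
    using Fs_mono[of t s] A assms by auto
  have [measurable]: "A \<in> sets Q" "C s u \<in> borel_measurable Q"
    using sets_Fs_subset[of s] As Q_sets C_measurable_Fs[of s u] subalgebra_Fs[of s] True assms
    by (auto intro: measurable_from_subalg)
  have "(\<integral>\<^sup>+\<omega>. Y_integrand s T u \<omega> * indicator A \<omega> \<partial>Q)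
      = (\<integral>\<^sup>+\<omega>. ennreal (w T (u - T + s)) * (C s u \<omega> * indicator A \<omega>) \<partial>Q)"
    using True by (intro nn_integral_cong) (simp add: Y_integrand_def mult_ac)
  also have "\<dots> = ennreal (w T (u - T + s)) * (\<integral>\<^sup>+\<omega>. C s u \<omega> * indicator A \<omega> \<partial>Q)"
    by (rule nn_integral_cmult) measurable
  also have "(\<integral>\<^sup>+\<omega>. C s u \<omega> * indicator A \<omega> \<partial>Q)
      = (\<integral>\<^sup>+\<omega>. ennreal (F (s + u) (X (s + u) \<omega>)) * indicator A \<omega> \<partial>Q)"
    by (rule nn_integral_C_indicator[OF _ _ _ As]) (use True assms in auto)
  finally show ?thesis
    using True by simp
qed (simp add: Y_integrand_def)

text \<open>The martingale property of t \<mapsto> Y_tT under M: after the Markov step both sides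
  are the same integral, up to the translation u \<mapsto> u + T - t.\<close>

lemma nn_integral_Yenn_indicator_eq:
  assumes "0 \<le> t" "t \<le> T" "T < U" and A: "A \<in> sets (Fs t)"
  shows "(\<integral>\<^sup>+\<omega>. Yenn C w U T T \<omega> * indicator A \<omega> \<partial>Q) = (\<integral>\<^sup>+\<omega>. Yenn C w U t T \<omega> * indicator A \<omega> \<partial>Q)"
proof -
  have AP: "A \<in> sets P"
    using sets_Fs_subset[of t] A assms by auto
  define G where "G s u = (\<integral>\<^sup>+\<omega>. Y_integrand s T u \<omega> * indicator A \<omega> \<partial>Q)" for s u
  define \<phi> where "\<phi> r = (\<integral>\<^sup>+\<omega>. ennreal (F r (X r \<omega>)) * indicator A \<omega> \<partial>Q)" for r
  have "G t u = indicator {T - t..U - t} u * ennreal (w T (u - T + t)) * \<phi> (t + u)" for u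
    unfolding G_def \<phi>_def by (rule nn_integral_Y_integrand_indicator[OF assms(1) order_refl assms(2,3) A])
  moreover have "G T v = indicator {T - T..U - T} v * ennreal (w T (v - T + T)) * \<phi> (T + v)" for v
    unfolding G_def \<phi>_def by (rule nn_integral_Y_integrand_indicator[OF assms(1,2) order_refl assms(3) A])
  ultimately have G_shift: "G t u = G T (t - T + u)" for u
    by (simp add: indicator_def algebra_simps)
  have G_T: "G T \<in> borel_measurable borel"
    unfolding G_def by (rule nn_integral_Yenn_indicator_Fubini(2)[OF _ _ AP]) (use assms in auto)
  have "(\<integral>\<^sup>+\<omega>. Yenn C w U t T \<omega> * indicator A \<omega> \<partial>Q) = (\<integral>\<^sup>+u. G t u \<partial>lborel)"
    unfolding G_def by (rule nn_integral_Yenn_indicator_Fubini(1)[OF _ _ AP]) (use assms in auto)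
  also have "\<dots> = (\<integral>\<^sup>+u. G T (t - T + u) \<partial>lborel)"
    by (simp only: G_shift)
  also have "\<dots> = (\<integral>\<^sup>+u. G T u \<partial>lborel)"
    using nn_integral_real_affine[OF G_T, of 1 "t - T"] by simp
  also have "\<dots> = (\<integral>\<^sup>+\<omega>. Yenn C w U T T \<omega> * indicator A \<omega> \<partial>Q)"
    unfolding G_def by (rule nn_integral_Yenn_indicator_Fubini(1)[OF _ _ AP, symmetric]) (use assms in auto)
  finally show ?thesis ..
qed

lemma nn_integral_Yenn_finite:
  assumes "0 \<le> s" "s \<le> T" "T < U"
  shows "(\<integral>\<^sup>+\<omega>. Yenn C w U s T \<omega> \<partial>Q) < \<infinity>"
proof -
  have "0 \<le> T"
    using assms by simp
  then obtain c where c: "c < \<infinity>" "AE \<omega> in P. Yenn C w U 0 T \<omega> = c"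
    using Yenn_0_AE_constant assms(3) by blast
  have integral_space: "(\<integral>\<^sup>+\<omega>. f \<omega> * indicator (space P) \<omega> \<partial>Q) = (\<integral>\<^sup>+\<omega>. f \<omega> \<partial>Q)" for f
    using Q_space by (intro nn_integral_cong) simp
  have top: "space P \<in> sets (Fs r)" for r
    by (metis sets.top space_Fs)
  have "(\<integral>\<^sup>+\<omega>. Yenn C w U s T \<omega> \<partial>Q) = (\<integral>\<^sup>+\<omega>. Yenn C w U 0 T \<omega> \<partial>Q)"
    using nn_integral_Yenn_indicator_eq[OF assms top] nn_integral_Yenn_indicator_eq[OF order_refl \<open>0 \<le> T\<close> assms(3) top]
    by (simp add: integral_space)
  also have "\<dots> = c"
    using c(2) by (simp add: AE_Q_iff_AE_P nn_integral_cong_AE Q.emeasure_space_1)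
  finally show ?thesis
    using c(1) by simp
qed

text \<open>kernel_forecast (f0 T) (f1 T) s T is E^P[pi_T | F_s].\<close>

definition kernel_forecast :: "real \<Rightarrow> real \<Rightarrow> real \<Rightarrow> real \<Rightarrow> 'a \<Rightarrow> real" where
  "kernel_forecast a b s T \<omega> = (a + b * Yr C w U s T \<omega>) * (Mg s \<omega> / Mg 0 \<omega>)"

lemma kernel_forecast_measurable:
  assumes "0 \<le> s" "s \<le> T" "T < U"
  shows "kernel_forecast a b s T \<in> borel_measurable (Fs s)"
    and "kernel_forecast a b s T \<in> borel_measurable P"
proof -
  have "subalgebra (Fs s) (Fs 0)"
    using Fs_mono[of 0 s] assms by (auto simp: subalgebra_def)
  then have [measurable]: "Mg 0 \<in> borel_measurable (Fs s)"
    by (rule measurable_from_subalg) (use Mg_adapted U_pos in auto)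
  have [measurable]: "Mg s \<in> borel_measurable (Fs s)" "Yr C w U s T \<in> borel_measurable (Fs s)"
    using Mg_adapted Yr_measurable_Fs assms by auto
  show F: "kernel_forecast a b s T \<in> borel_measurable (Fs s)"
    unfolding kernel_forecast_def[abs_def] by measurable
  show "kernel_forecast a b s T \<in> borel_measurable P"
    by (rule measurable_from_subalg[OF subalgebra_Fs F]) (use assms in simp)
qed

lemma AE_kernel_forecast_pos:
  assumes "0 < a" "0 \<le> b" "0 \<le> s" "s < U"
  shows "AE \<omega> in P. 0 < kernel_forecast a b s T \<omega>"
proof -
  have "AE \<omega> in P. 0 < Mg s \<omega> \<and> 0 < Mg 0 \<omega>"
    using Mg_pos assms U_pos by auto
  then show ?thesis
    by eventually_elim (use assms in \<open>auto simp: kernel_forecast_def Yr_def intro!: divide_pos_pos mult_pos_pos add_pos_nonneg\<close>)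
qed

lemma AE_kernel_forecast_nonneg:
  assumes "0 \<le> a" "0 \<le> b" "0 \<le> s" "s < U"
  shows "AE \<omega> in P. 0 \<le> kernel_forecast a b s T \<omega>"
proof -
  have "AE \<omega> in P. 0 < Mg s \<omega> \<and> 0 < Mg 0 \<omega>"
    using Mg_pos assms U_pos by auto
  then show ?thesis
    by eventually_elim (use assms in \<open>auto simp: kernel_forecast_def Yr_def\<close>)
qed

lemma nn_integral_kernel_forecast_indicator:
  assumes "0 \<le> a" "0 \<le> b" "0 \<le> s" "s \<le> T" "T < U" and A: "A \<in> sets (Fs s)"
  shows "(\<integral>\<^sup>+\<omega>. ennreal (indicator A \<omega> * kernel_forecast a b s T \<omega>) \<partial>P)
       = ennreal a * emeasure Q A + ennreal b * (\<integral>\<^sup>+\<omega>. Yenn C w U s T \<omega> * indicator A \<omega> \<partial>Q)"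
proof -
  have sU: "s \<le> U" using assms by simp
  define h where "h \<omega> = ennreal (indicator A \<omega> * (a + b * Yr C w U s T \<omega>))" for \<omega>
  have [measurable]: "Yr C w U s T \<in> borel_measurable (Fs s)"
    using Yr_measurable_Fs assms by simp
  have h: "h \<in> borel_measurable (Fs s)"
    unfolding h_def using A by measurable
  have "AE \<omega> in P. 0 < Mg s \<omega> \<and> 0 < Mg 0 \<omega>"
    using Mg_pos assms U_pos by auto
  then have "AE \<omega> in P. ennreal (indicator A \<omega> * kernel_forecast a b s T \<omega>)
                        = ennreal (Mg s \<omega> / Mg 0 \<omega>) * h \<omega>"
  proof eventually_elim
    case (elim \<omega>)
    have "indicator A \<omega> * kernel_forecast a b s T \<omega>
        = Mg s \<omega> / Mg 0 \<omega> * (indicator A \<omega> * (a + b * Yr C w U s T \<omega>))"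
      by (simp add: kernel_forecast_def)
    then show ?case
      unfolding h_def by (simp only:) (rule ennreal_mult; use elim assms in \<open>simp add: Yr_def\<close>)
  qed
  then have "(\<integral>\<^sup>+\<omega>. ennreal (indicator A \<omega> * kernel_forecast a b s T \<omega>) \<partial>P) = (\<integral>\<^sup>+\<omega>. h \<omega> \<partial>Q)"
    using nn_integral_change_measure[OF _ h] assms by (simp add: nn_integral_cong_AE)
  also have "\<dots> = (\<integral>\<^sup>+\<omega>. ennreal a * indicator A \<omega> + ennreal b * (Yenn C w U s T \<omega> * indicator A \<omega>) \<partial>Q)"
  proof (rule nn_integral_cong_AE)
    have "AE \<omega> in Q. Yenn C w U s T \<omega> < \<infinity>"
      using Yenn_finite assms by (simp add: AE_Q_iff_AE_P)
    then show "AE \<omega> in Q. h \<omega> = ennreal a * indicator A \<omega> + ennreal b * (Yenn C w U s T \<omega> * indicator A \<omega>)"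
    proof eventually_elim
      case (elim \<omega>)
      then have "ennreal (a + b * Yr C w U s T \<omega>) = ennreal a + ennreal b * Yenn C w U s T \<omega>"
        using assms by (simp add: Yr_def ennreal_mult)
      then show ?case
        unfolding h_def by (simp add: indicator_def)
    qed
  qed
  also have "\<dots> = ennreal a * emeasure Q A + ennreal b * (\<integral>\<^sup>+\<omega>. Yenn C w U s T \<omega> * indicator A \<omega> \<partial>Q)"
  proof -
    have [measurable]: "A \<in> sets Q" "Yenn C w U s T \<in> borel_measurable Q"
      using A sets_Fs_subset[OF sU] Q_sets Yenn_measurable[OF assms(3) sU] by auto
    have "(\<integral>\<^sup>+\<omega>. ennreal a * indicator A \<omega> + ennreal b * (Yenn C w U s T \<omega> * indicator A \<omega>) \<partial>Q)
        = (\<integral>\<^sup>+\<omega>. ennreal a * indicator A \<omega> \<partial>Q) + (\<integral>\<^sup>+\<omega>. ennreal b * (Yenn C w U s T \<omega> * indicator A \<omega>) \<partial>Q)"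
      by (rule nn_integral_add) measurable
    also have "(\<integral>\<^sup>+\<omega>. ennreal b * (Yenn C w U s T \<omega> * indicator A \<omega>) \<partial>Q)
        = ennreal b * (\<integral>\<^sup>+\<omega>. Yenn C w U s T \<omega> * indicator A \<omega> \<partial>Q)"
      by (rule nn_integral_cmult) measurable
    also have "(\<integral>\<^sup>+\<omega>. ennreal a * indicator A \<omega> \<partial>Q) = ennreal a * emeasure Q A"
      by (rule nn_integral_cmult_indicator) measurable
    finally show ?thesis .
  qed
  finally show ?thesis .
qed

lemma integrable_kernel_forecast:
  assumes "0 \<le> a" "0 \<le> b" "0 \<le> s" "s \<le> T" "T < U"
  shows "integrable P (kernel_forecast a b s T)"
proof (rule integrableI_nonneg)
  show "kernel_forecast a b s T \<in> borel_measurable P"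
    using kernel_forecast_measurable assms by simp
  show "AE \<omega> in P. 0 \<le> kernel_forecast a b s T \<omega>"
    using AE_kernel_forecast_nonneg assms by simp
  have "(\<integral>\<^sup>+\<omega>. ennreal (kernel_forecast a b s T \<omega>) \<partial>P)
      = (\<integral>\<^sup>+\<omega>. ennreal (indicator (space P) \<omega> * kernel_forecast a b s T \<omega>) \<partial>P)"
    by (intro nn_integral_cong) simp
  also have "\<dots> = ennreal a * emeasure Q (space P)
      + ennreal b * (\<integral>\<^sup>+\<omega>. Yenn C w U s T \<omega> * indicator (space P) \<omega> \<partial>Q)"
    by (rule nn_integral_kernel_forecast_indicator[OF assms]) (metis sets.top space_Fs)
  also have "emeasure Q (space P) = 1"
    using Q.emeasure_space_1 Q_space by simp
  also have "(\<integral>\<^sup>+\<omega>. Yenn C w U s T \<omega> * indicator (space P) \<omega> \<partial>Q) = (\<integral>\<^sup>+\<omega>. Yenn C w U s T \<omega> \<partial>Q)"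
    using Q_space by (intro nn_integral_cong) simp
  finally show "(\<integral>\<^sup>+\<omega>. ennreal (kernel_forecast a b s T \<omega>) \<partial>P) < \<infinity>"
    using nn_integral_Yenn_finite assms by (simp add: ennreal_mult_less_top)
qed

lemma AE_cond_exp_kernel_forecast:
  assumes "0 \<le> a" "0 \<le> b" "0 \<le> t" "t \<le> T" "T < U"
  shows "AE \<omega> in P. real_cond_exp P (Fs t) (kernel_forecast a b T T) \<omega> = kernel_forecast a b t T \<omega>"
proof -
  have tU: "t \<le> U" using assms by simp
  interpret Fs_t: finite_measure_subalgebra P "Fs t"
    by unfold_locales (rule subalgebra_Fs[OF tU])
  show ?thesis
  proof (rule Fs_t.real_cond_exp_charact)
    fix A assume A: "A \<in> sets (Fs t)"
    have AT: "A \<in> sets (Fs T)"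
      using Fs_mono[of t T] A assms by auto
    have [measurable]: "A \<in> sets P"
      using sets_Fs_subset[OF tU] A by auto
    have set_integral_eq: "(\<integral>\<omega>\<in>A. kernel_forecast a b r T \<omega> \<partial>P)
        = enn2real (\<integral>\<^sup>+\<omega>. ennreal (indicator A \<omega> * kernel_forecast a b r T \<omega>) \<partial>P)"
      if "0 \<le> r" "r \<le> T" for r
    proof -
      have [measurable]: "kernel_forecast a b r T \<in> borel_measurable P"
        using kernel_forecast_measurable that assms by simp
      have "AE \<omega> in P. 0 \<le> indicator A \<omega> * kernel_forecast a b r T \<omega>"
        using AE_kernel_forecast_nonneg[of a b r T] that assms by (auto simp: indicator_def)
      then show ?thesis
        unfolding set_lebesgue_integral_def by (simp add: integral_eq_nn_integral)
    qed
    have "(\<integral>\<^sup>+\<omega>. ennreal (indicator A \<omega> * kernel_forecast a b T T \<omega>) \<partial>P)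
        = ennreal a * emeasure Q A + ennreal b * (\<integral>\<^sup>+\<omega>. Yenn C w U T T \<omega> * indicator A \<omega> \<partial>Q)"
      using nn_integral_kernel_forecast_indicator[OF assms(1,2) _ order_refl assms(5) AT] assms by simp
    also have "\<dots> = ennreal a * emeasure Q A + ennreal b * (\<integral>\<^sup>+\<omega>. Yenn C w U t T \<omega> * indicator A \<omega> \<partial>Q)"
      by (simp only: nn_integral_Yenn_indicator_eq[OF assms(3-5) A])
    also have "\<dots> = (\<integral>\<^sup>+\<omega>. ennreal (indicator A \<omega> * kernel_forecast a b t T \<omega>) \<partial>P)"
      by (rule nn_integral_kernel_forecast_indicator[symmetric, OF assms A])
    finally show "(\<integral>\<omega>\<in>A. kernel_forecast a b T T \<omega> \<partial>P) = (\<integral>\<omega>\<in>A. kernel_forecast a b t T \<omega> \<partial>P)"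
      using set_integral_eq[of T] set_integral_eq[of t] assms by simp
  qed (use integrable_kernel_forecast kernel_forecast_measurable assms in auto)
qed

lemma AE_kernel_forecast_antimono:
  assumes "0 \<le> a'" "a' \<le> a" "0 \<le> b'" "b' \<le> b" "0 \<le> s" "s \<le> t" "t < U"
  shows "AE \<omega> in P. kernel_forecast a' b' s t \<omega> \<le> kernel_forecast a b s s \<omega>"
proof -
  have "AE \<omega> in P. 0 < Mg s \<omega> \<and> 0 < Mg 0 \<omega> \<and> Yenn C w U s s \<omega> < \<infinity>"
    using Mg_pos Yenn_finite U_pos assms by auto
  then show ?thesis
  proof eventually_elim
    case (elim \<omega>)
    have "Yr C w U s t \<omega> \<le> Yr C w U s s \<omega>"
      unfolding Yr_def using Yenn_antimono[of s t \<omega>] elim assms by (simp add: enn2real_mono)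
    then have "a' + b' * Yr C w U s t \<omega> \<le> a + b * Yr C w U s s \<omega>"
      using assms by (intro add_mono mult_mono) (auto simp: Yr_def)
    moreover have "0 \<le> Mg s \<omega> / Mg 0 \<omega>"
      using elim by simp
    ultimately show ?case
      unfolding kernel_forecast_def by (rule mult_right_mono)
  qed
qed

lemma supermartingale_kernel_forecast:
  assumes f0_pos: "\<forall>t\<in>{0..<U}. 0 < f0 t" and f1_pos: "\<forall>t\<in>{0..<U}. 0 < f1 t"
    and f0_noninc: "\<forall>s t. 0 \<le> s \<longrightarrow> s \<le> t \<longrightarrow> t < U \<longrightarrow> f0 t \<le> f0 s"
    and f1_noninc: "\<forall>s t. 0 \<le> s \<longrightarrow> s \<le> t \<longrightarrow> t < U \<longrightarrow> f1 t \<le> f1 s"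
  shows "supermartingale_on P Fs {0..<U} (\<lambda>t. kernel_forecast (f0 t) (f1 t) t t)"
  unfolding supermartingale_on_def
proof (intro conjI ballI impI)
  fix t assume t: "t \<in> {0..<U}"
  then have "0 \<le> f0 t" "0 \<le> f1 t"
    using f0_pos f1_pos by (auto intro: less_imp_le)
  with t show "integrable P (kernel_forecast (f0 t) (f1 t) t t)"
    "kernel_forecast (f0 t) (f1 t) t t \<in> borel_measurable (Fs t)"
    using integrable_kernel_forecast kernel_forecast_measurable by auto
next
  fix s t assume "s \<in> {0..<U}" "t \<in> {0..<U}" "s \<le> t"
  moreover from this have "0 < f0 t" "0 < f1 t" "f0 t \<le> f0 s" "f1 t \<le> f1 s"
    using f0_pos f1_pos f0_noninc f1_noninc by auto
  ultimately have
    "AE \<omega> in P. real_cond_exp P (Fs s) (kernel_forecast (f0 t) (f1 t) t t) \<omega>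
                  = kernel_forecast (f0 t) (f1 t) s t \<omega>"
    "AE \<omega> in P. kernel_forecast (f0 t) (f1 t) s t \<omega> \<le> kernel_forecast (f0 s) (f1 s) s s \<omega>"
    using AE_cond_exp_kernel_forecast AE_kernel_forecast_antimono by auto
  then show "AE \<omega> in P. real_cond_exp P (Fs s) (kernel_forecast (f0 t) (f1 t) t t) \<omega>
                         \<le> kernel_forecast (f0 s) (f1 s) s s \<omega>"
    by eventually_elim simp
qed

lemma AE_cond_exp_kernel_forecast_divide:
  assumes "0 \<le> a" "0 \<le> b" "0 < a'" "0 \<le> b'" "0 \<le> t" "t \<le> T" "T < U"
  shows "AE \<omega> in P. real_cond_exp P (Fs t) (kernel_forecast a b T T) \<omega> / kernel_forecast a' b' t t \<omega>
                     = (a + b * Yr C w U t T \<omega>) / (a' + b' * Yr C w U t t \<omega>)"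
proof -
  have "AE \<omega> in P. 0 < Mg t \<omega> \<and> 0 < Mg 0 \<omega>"
    using Mg_pos U_pos assms by auto
  with AE_cond_exp_kernel_forecast[OF assms(1,2,5-7)] show ?thesis
    by eventually_elim (simp add: kernel_forecast_def)
qed

end

theorem proposition2p1:
  fixes P Q :: "'a measure" and S :: "'b measure"
    and X :: "real \<Rightarrow> 'a \<Rightarrow> 'b" and Fs :: "real \<Rightarrow> 'a measure"
    and Mg :: "real \<Rightarrow> 'a \<Rightarrow> real" and U :: real
    and f0 f1 :: "real \<Rightarrow> real" and F :: "real \<Rightarrow> 'b \<Rightarrow> real"
    and w :: "real \<Rightarrow> real \<Rightarrow> real"
    and C :: "real \<Rightarrow> real \<Rightarrow> 'a \<Rightarrow> ennreal"
    and Y :: "real \<Rightarrow> real \<Rightarrow> 'a \<Rightarrow> real"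
    and pi0 :: "'a \<Rightarrow> real" and P0 yM :: "real \<Rightarrow> 'a \<Rightarrow> real"
    and pk :: "real \<Rightarrow> 'a \<Rightarrow> real"
  assumes P_prob: "prob_space P"
    and P_complete: "complete_measure P"
    and U_pos: "0 < U"
    and X_meas: "\<forall>t\<in>{0..U}. X t \<in> measurable P S"
    and X0_det: "\<exists>x0\<in>space S. AE \<omega> in P. X 0 \<omega> = x0"
    and Fs_def: "\<forall>t. Fs t = aug_nat_filtration P S X t"
    and Fs_rcont: "\<forall>t\<in>{0..<U}. sets (Fs t) = (\<Inter>s\<in>{t<..U}. sets (Fs s))"
    and X_markov_P: "markov_on P S Fs X U"
    and Mg_mart: "martingale_on P Fs {0..<U} Mg"
    and Mg_pos: "\<forall>t\<in>{0..<U}. AE \<omega> in P. 0 < Mg t \<omega>"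
    and Q_prob: "prob_space Q"
    and Q_space: "space Q = space P"
    and Q_sets: "sets Q = sets P"
    and Q_equiv: "\<forall>A\<in>sets P. emeasure P A = 0 \<longleftrightarrow> emeasure Q A = 0"
    and Q_density: "\<forall>t\<in>{0..<U}. \<forall>A\<in>sets (Fs t).
                      emeasure Q A = (\<integral>\<^sup>+ \<omega> \<in> A. ennreal (Mg t \<omega> / Mg 0 \<omega>) \<partial>P)"
    and X_markov_Q: "markov_on Q S Fs X U"
    and f0_pos: "\<forall>t\<in>{0..<U}. 0 < f0 t"
    and f1_pos: "\<forall>t\<in>{0..<U}. 0 < f1 t"
    and f0_noninc: "\<forall>s t. 0 \<le> s \<longrightarrow> s \<le> t \<longrightarrow> t < U \<longrightarrow> f0 t \<le> f0 s"
    and f1_noninc: "\<forall>s t. 0 \<le> s \<longrightarrow> s \<le> t \<longrightarrow> t < U \<longrightarrow> f1 t \<le> f1 s"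
    and F_meas: "(\<lambda>(t, x). F t x) \<in> borel_measurable (borel \<Otimes>\<^sub>M S)"
    and F_pos: "\<forall>t\<in>{0..U}. \<forall>x\<in>space S. 0 < F t x"
    and w_meas: "(\<lambda>(t, u). w t u) \<in> borel_measurable (borel \<Otimes>\<^sub>M borel)"
    and w_pos: "\<forall>t u. 0 \<le> t \<longrightarrow> 0 \<le> u \<longrightarrow> 0 < w t u"
    and w_ineq: "\<forall>t u s. 0 \<le> s \<longrightarrow> s \<le> t \<longrightarrow> s \<le> u \<longrightarrow> w t (u - s) \<le> w (t - s) u"
    and C_meas: "\<forall>t\<in>{0..U}. (\<lambda>(u, \<omega>). C t u \<omega>) \<in> borel_measurable (lborel \<Otimes>\<^sub>M P)"
    and C_version: "\<forall>t u. 0 \<le> t \<longrightarrow> 0 \<le> u \<longrightarrow> t + u \<le> U \<longrightarrow>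
           C t u \<in> borel_measurable (sigma_of Q S (X t)) \<and>
           (AE \<omega> in Q. C t u \<omega> =
              nn_cond_exp Q (sigma_of Q S (X t)) (\<lambda>\<omega>. ennreal (F (t + u) (X (t + u) \<omega>))) \<omega>)"
    and Y_finite: "\<forall>t T. 0 \<le> t \<longrightarrow> t \<le> T \<longrightarrow> T < U \<longrightarrow> (AE \<omega> in P. Yenn C w U t T \<omega> < \<infinity>)"
    and Y_def: "Y = Yr C w U"
    and pi0_def: "pi0 = (\<lambda>\<omega>. 1 + f1 0 * Y 0 0 \<omega>)"
    and P0_def: "P0 = (\<lambda>t \<omega>. (f0 t + f1 t * Y 0 t \<omega>) / (1 + f1 0 * Y 0 0 \<omega>))"
    and yM_def: "yM = (\<lambda>t \<omega>. f1 t / (1 + f1 0 * Y 0 0 \<omega>))"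
    and pk_def: "pk = (\<lambda>t \<omega>. pi0 \<omega> / Mg 0 \<omega> *
                          (P0 t \<omega> + yM t \<omega> * (Y t t \<omega> - Y 0 t \<omega>)) * Mg t \<omega>)"
  shows "(\<forall>t\<in>{0..<U}. AE \<omega> in P. 0 < pk t \<omega>) \<and>
         supermartingale_on P Fs {0..<U} pk \<and>
         (\<forall>t T. 0 \<le> t \<longrightarrow> t \<le> T \<longrightarrow> T < U \<longrightarrow>
            (AE \<omega> in P. real_cond_exp P (Fs t) (pk T) \<omega> / pk t \<omega> =
               (P0 T \<omega> + yM T \<omega> * (Y t T \<omega> - Y 0 T \<omega>)) /
               (P0 t \<omega> + yM t \<omega> * (Y t t \<omega> - Y 0 t \<omega>))))"
proof -
  interpret weighted_heat_kernel P S X U Fs Q Mg F w C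
    unfolding weighted_heat_kernel_def weighted_heat_kernel_axioms_def
      augmented_filtration_def augmented_filtration_axioms_def
    using assms by (auto simp: martingale_on_def)
  have "0 < f1 0"
    using f1_pos U_pos by simp
  then have pi0_pos: "0 < pi0 \<omega>" for \<omega>
    by (simp add: pi0_def Y_def Yr_def add_pos_nonneg)
  have bond_numerator_eq: "P0 T \<omega> + yM T \<omega> * (Y t T \<omega> - Y 0 T \<omega>) = (f0 T + f1 T * Y t T \<omega>) / pi0 \<omega>"
    for t T \<omega>
    unfolding P0_def yM_def pi0_def by (simp add: add_divide_distrib[symmetric] algebra_simps)
  have pk_eq: "pk = (\<lambda>t. kernel_forecast (f0 t) (f1 t) t t)"
  proof (intro ext)
    fix t \<omega>
    have "pk t \<omega> = pi0 \<omega> / Mg 0 \<omega> * ((f0 t + f1 t * Y t t \<omega>) / pi0 \<omega>) * Mg t \<omega>"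
      unfolding pk_def bond_numerator_eq ..
    also have "\<dots> = kernel_forecast (f0 t) (f1 t) t t \<omega>"
      using pi0_pos[of \<omega>] by (cases "Mg 0 \<omega> = 0") (simp_all add: kernel_forecast_def Y_def field_simps)
    finally show "pk t \<omega> = kernel_forecast (f0 t) (f1 t) t t \<omega>" .
  qed
  have divide_cancel_pi0: "(x / pi0 \<omega>) / (y / pi0 \<omega>) = x / y" for x y \<omega>
    using pi0_pos[of \<omega>] by (cases "y = 0") simp_all
  show ?thesis
  proof (intro conjI ballI allI impI)
    fix t assume "t \<in> {0..<U}"
    then show "AE \<omega> in P. 0 < pk t \<omega>"
      unfolding pk_eq using f0_pos f1_pos by (intro AE_kernel_forecast_pos) (auto intro: less_imp_le)
  next
    show "supermartingale_on P Fs {0..<U} pk"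
      unfolding pk_eq using f0_pos f1_pos f0_noninc f1_noninc by (rule supermartingale_kernel_forecast)
  next
    fix t T :: real assume "0 \<le> t" "t \<le> T" "T < U"
    then show "AE \<omega> in P. real_cond_exp P (Fs t) (pk T) \<omega> / pk t \<omega> =
               (P0 T \<omega> + yM T \<omega> * (Y t T \<omega> - Y 0 T \<omega>)) /
               (P0 t \<omega> + yM t \<omega> * (Y t t \<omega> - Y 0 t \<omega>))"
      unfolding pk_eq bond_numerator_eq divide_cancel_pi0 unfolding Y_def
      using f0_pos f1_pos by (intro AE_cond_exp_kernel_forecast_divide) (auto intro: less_imp_le)
  qed
qed

end
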